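(* The connective $\to$ is not definable in $\textsf{INQ}^-$: there is no formula $\varphi(a,b)$ of $\textsf{INQ}^-$ such that for all formulas $\eta,\theta$ of $\textsf{INQ}^-$, $\varphi(\eta,\theta)\equiv\eta\to\theta$ (where $\varphi(\eta,\theta)$ is obtained by replacing each occurrence of $a$ with $\eta$ and each occurrence of $b$ with $\theta$).
   Context: $\textsf{INQ}^-$ is the propositional language built from countably many propositional letters using $\bot,\top$, unary $\neg,?$ and binary $\land$, $\vee$ (inquisitive disjunction), $\otimes$ (tensor); it does not contain $\to$. A model is $M=(W,V)$ with $V$ assigning to each world a set of letters. Support at $s\subseteq W$: $s\models p$ iff $p\in V(w)$ for all $w\in s$; $s\models\bot$ iff $s=\emptyset$; $s\models\top$ always; $s\models\psi\land\chi$ iff both; $s\models\psi\vee\chi$ iff $s\models\psi$ or $s\models\chi$; $s\models\psi\otimes\chi$ iff $s=t_1\cup t_2$ for some $t_1\models\psi$, $t_2\models\chi$; $s\models\psi\to\chi$ iff for all $t\subseteq s$, $t\models\psi$ implies $t\models\chi$; $s\models\neg\psi$ iff $s\models\psi\to\bot$; $s\models?\psi$ iff $s\models\psi$ or $s\models\neg\psi$. $\psi\equiv\chi$ means that in every model, $\psi$ and $\chi$ are supported by the same states. *)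

theory Defs
  imports Main
begin

text \<open>Formulas of INQ (letters indexed by nat); INQ-minus = the Imp-free fragment.\<close>
datatype form =
    Atom nat
  | Bot
  | Top
  | Neg form
  | Ques form
  | Conj form form
  | IDisj form form
  | Tensor form form
  | Imp form form

fun imp_free :: "form \<Rightarrow> bool" where
  "imp_free (Atom p) = True"
| "imp_free Bot = True"
| "imp_free Top = True"
| "imp_free (Neg f) = imp_free f"
| "imp_free (Ques f) = imp_free f"
| "imp_free (Conj f g) = (imp_free f \<and> imp_free g)"
| "imp_free (IDisj f g) = (imp_free f \<and> imp_free g)"
| "imp_free (Tensor f g) = (imp_free f \<and> imp_free g)"
| "imp_free (Imp f g) = False"

fun supp :: "('w \<Rightarrow> nat set) \<Rightarrow> 'w set \<Rightarrow> form \<Rightarrow> bool" where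
  "supp V s (Atom p) = (\<forall>w\<in>s. p \<in> V w)"
| "supp V s Bot = (s = {})"
| "supp V s Top = True"
| "supp V s (Conj f g) = (supp V s f \<and> supp V s g)"
| "supp V s (IDisj f g) = (supp V s f \<or> supp V s g)"
| "supp V s (Tensor f g) = (\<exists>t1 t2. s = t1 \<union> t2 \<and> supp V t1 f \<and> supp V t2 g)"
| "supp V s (Imp f g) = (\<forall>t. t \<subseteq> s \<longrightarrow> supp V t f \<longrightarrow> supp V t g)"
| "supp V s (Neg f) = (\<forall>t. t \<subseteq> s \<longrightarrow> supp V t f \<longrightarrow> t = {})"
| "supp V s (Ques f) = (supp V s f \<or> (\<forall>t. t \<subseteq> s \<longrightarrow> supp V t f \<longrightarrow> t = {}))"

definition equiv_on :: "'w itself \<Rightarrow> form \<Rightarrow> form \<Rightarrow> bool" where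
  "equiv_on _ f g =
     (\<forall>(W::'w set) (V::'w \<Rightarrow> nat set) s. s \<subseteq> W \<longrightarrow> (supp V s f \<longleftrightarrow> supp V s g))"

fun subst2 :: "nat \<Rightarrow> nat \<Rightarrow> form \<Rightarrow> form \<Rightarrow> form \<Rightarrow> form" where
  "subst2 a b e t (Atom p) = (if p = a then e else if p = b then t else Atom p)"
| "subst2 a b e t Bot = Bot"
| "subst2 a b e t Top = Top"
| "subst2 a b e t (Neg f) = Neg (subst2 a b e t f)"
| "subst2 a b e t (Ques f) = Ques (subst2 a b e t f)"
| "subst2 a b e t (Conj f g) = Conj (subst2 a b e t f) (subst2 a b e t g)"
| "subst2 a b e t (IDisj f g) = IDisj (subst2 a b e t f) (subst2 a b e t g)"
| "subst2 a b e t (Tensor f g) = Tensor (subst2 a b e t f) (subst2 a b e t g)"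
| "subst2 a b e t (Imp f g) = Imp (subst2 a b e t f) (subst2 a b e t g)"

end

theory Submission
  imports Defs
begin

text \<open>
  Every formula of the implication-free fragment is supported exactly by the subsets of finitely
  many states, and the number of these generating states is controlled compositionally: the
  connectives add or multiply the counts, while \<open>\<not>\<close> always needs a single one. Hence if
  \<open>\<eta>\<close> and \<open>\<theta>\<close> need at most \<open>c \<ge> 2\<close> generating states, \<open>\<phi>(\<eta>,\<theta>)\<close> needs at most
  \<open>c ^ (size \<phi> + 1)\<close>, a polynomial in \<open>c\<close> for fixed \<open>\<phi>\<close>. On the other hand, in a model with
  worlds \<open>(i, b)\<close> making \<open>p\<^sub>i\<close> true and \<open>p\<^sub>0\<close> true iff \<open>b\<close>, the implication
  \<open>\<bottom> \<or> p\<^sub>1 \<or> \<dots> \<or> p\<^sub>m \<rightarrow> ?p\<^sub>0\<close> is supported by each of the \<open>2 ^ m\<close> states choosing one world \<open>(i, b)\<close>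
  per \<open>i\<close>, but by no union of two of them, so it needs \<open>2 ^ m\<close> generating states while its
  antecedent and consequent need only \<open>m + 1\<close> and \<open>2\<close>. For large \<open>m\<close>, \<open>2 ^ m\<close> exceeds
  \<open>(m + 2) ^ (size \<phi> + 1)\<close>.
\<close>

definition alternatives_le :: "('w \<Rightarrow> nat set) \<Rightarrow> form \<Rightarrow> nat \<Rightarrow> bool" where
  "alternatives_le V f k \<longleftrightarrow>
     (\<exists>F. finite F \<and> card F \<le> k \<and> (\<forall>s. supp V s f \<longleftrightarrow> (\<exists>a\<in>F. s \<subseteq> a)))"

lemma alternatives_leI:
  assumes "finite F" "card F \<le> k" "\<And>s. supp V s f \<longleftrightarrow> (\<exists>a\<in>F. s \<subseteq> a)"
  shows "alternatives_le V f k"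
  using assms unfolding alternatives_le_def by blast

lemma alternatives_leE:
  assumes "alternatives_le V f k"
  obtains F where "finite F" "card F \<le> k" "\<And>s. supp V s f \<longleftrightarrow> (\<exists>a\<in>F. s \<subseteq> a)"
  using assms unfolding alternatives_le_def by blast

lemma alternatives_le_mono: "alternatives_le V f k \<Longrightarrow> k \<le> k' \<Longrightarrow> alternatives_le V f k'"
  unfolding alternatives_le_def using le_trans by blast

lemma alternatives_le_cong:
  "(\<And>s. supp V s f \<longleftrightarrow> supp V s g) \<Longrightarrow> alternatives_le V f k \<longleftrightarrow> alternatives_le V g k"
  unfolding alternatives_le_def by simp

lemma equiv_on_supp_iff:
  "equiv_on TYPE('w) f g \<Longrightarrow> supp (V :: 'w \<Rightarrow> nat set) s f \<longleftrightarrow> supp V s g"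
  unfolding equiv_on_def by blast

lemma alternatives_le_Atom: "alternatives_le V (Atom p) 1"
  by (rule alternatives_leI[of "{{w. p \<in> V w}}"]) auto

lemma alternatives_le_Bot: "alternatives_le V Bot 1"
  by (rule alternatives_leI[of "{{}}"]) auto

lemma alternatives_le_Top: "alternatives_le V Top 1"
  by (rule alternatives_leI[of "{UNIV}"]) auto

lemma alternatives_le_Neg:
  assumes "alternatives_le V f k"
  shows "alternatives_le V (Neg f) 1"
proof -
  obtain F where F: "\<And>s. supp V s f \<longleftrightarrow> (\<exists>a\<in>F. s \<subseteq> a)"
    using assms unfolding alternatives_le_def by blast
  have "supp V s (Neg f) \<longleftrightarrow> s \<subseteq> - \<Union>F" for s
  proof
    assume neg: "supp V s (Neg f)"
    show "s \<subseteq> - \<Union>F"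
    proof
      fix w assume "w \<in> s"
      have "\<not> supp V {w} f" using neg \<open>w \<in> s\<close> by (simp add: insert_subset) blast
      then show "w \<in> - \<Union>F" using F[of "{w}"] by blast
    qed
  next
    assume s: "s \<subseteq> - \<Union>F"
    have "t = {}" if "t \<subseteq> s" "supp V t f" for t
      using F[of t] s that by blast
    then show "supp V s (Neg f)" by simp
  qed
  then show ?thesis by (intro alternatives_leI[of "{- \<Union>F}"]) auto
qed

lemma alternatives_le_Ques:
  assumes "alternatives_le V f k"
  shows "alternatives_le V (Ques f) (k + 1)"
proof -
  obtain F where F: "finite F" "card F \<le> k" "\<And>s. supp V s f \<longleftrightarrow> (\<exists>a\<in>F. s \<subseteq> a)"
    using assms by (elim alternatives_leE) blast
  obtain G where G: "finite G" "card G \<le> 1" "\<And>s. supp V s (Neg f) \<longleftrightarrow> (\<exists>a\<in>G. s \<subseteq> a)"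
    using alternatives_le_Neg[OF assms] by (elim alternatives_leE) blast
  show ?thesis
  proof (rule alternatives_leI[of "F \<union> G"])
    show "card (F \<union> G) \<le> k + 1" using card_Un_le[of F G] F G by linarith
    have "supp V s (Ques f) \<longleftrightarrow> supp V s f \<or> supp V s (Neg f)" for s
      by simp
    then show "supp V s (Ques f) \<longleftrightarrow> (\<exists>a\<in>F \<union> G. s \<subseteq> a)" for s
      using F(3)[of s] G(3)[of s] by blast
  qed (use F G in simp)
qed

lemma alternatives_le_IDisj:
  assumes "alternatives_le V f k" "alternatives_le V g l"
  shows "alternatives_le V (IDisj f g) (k + l)"
proof -
  obtain F where F: "finite F" "card F \<le> k" "\<And>s. supp V s f \<longleftrightarrow> (\<exists>a\<in>F. s \<subseteq> a)"
    using assms(1) by (elim alternatives_leE) blast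
  obtain G where G: "finite G" "card G \<le> l" "\<And>s. supp V s g \<longleftrightarrow> (\<exists>a\<in>G. s \<subseteq> a)"
    using assms(2) by (elim alternatives_leE) blast
  show ?thesis
  proof (rule alternatives_leI[of "F \<union> G"])
    show "card (F \<union> G) \<le> k + l" using card_Un_le[of F G] F G by linarith
  qed (use F G in auto)
qed

lemma card_image_product_le:
  assumes "finite A" "finite B" "card A \<le> k" "card B \<le> l"
  shows "card ((\<lambda>(x, y). h x y) ` (A \<times> B)) \<le> k * l"
proof -
  have "card ((\<lambda>(x, y). h x y) ` (A \<times> B)) \<le> card (A \<times> B)"
    using assms(1,2) by (intro card_image_le) simp
  also have "\<dots> = card A * card B"
    by (rule card_cartesian_product)
  also have "\<dots> \<le> k * l"
    using assms(3,4) by (rule mult_le_mono)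
  finally show ?thesis .
qed

lemma alternatives_le_Conj:
  assumes "alternatives_le V f k" "alternatives_le V g l"
  shows "alternatives_le V (Conj f g) (k * l)"
proof -
  obtain F where F: "finite F" "card F \<le> k" "\<And>s. supp V s f \<longleftrightarrow> (\<exists>a\<in>F. s \<subseteq> a)"
    using assms(1) by (elim alternatives_leE) blast
  obtain G where G: "finite G" "card G \<le> l" "\<And>s. supp V s g \<longleftrightarrow> (\<exists>a\<in>G. s \<subseteq> a)"
    using assms(2) by (elim alternatives_leE) blast
  have supp_iff: "supp V s (Conj f g) \<longleftrightarrow> (\<exists>c\<in>(\<lambda>(a, b). a \<inter> b) ` (F \<times> G). s \<subseteq> c)" for s
  proof
    assume "supp V s (Conj f g)"
    then obtain a b where "a \<in> F" "s \<subseteq> a" "b \<in> G" "s \<subseteq> b"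
      using F(3) G(3) by auto
    then show "\<exists>c\<in>(\<lambda>(a, b). a \<inter> b) ` (F \<times> G). s \<subseteq> c"
      by (intro bexI[of _ "a \<inter> b"]) auto
  next
    assume "\<exists>c\<in>(\<lambda>(a, b). a \<inter> b) ` (F \<times> G). s \<subseteq> c"
    then obtain a b where "a \<in> F" "b \<in> G" "s \<subseteq> a \<inter> b" by auto
    then show "supp V s (Conj f g)" using F(3) G(3) by auto
  qed
  have card: "card ((\<lambda>(a, b). a \<inter> b) ` (F \<times> G)) \<le> k * l"
    using F(1) G(1) F(2) G(2) by (rule card_image_product_le)
  show ?thesis
    by (rule alternatives_leI[OF _ card supp_iff]) (simp add: F(1) G(1))
qed

lemma alternatives_le_Tensor:
  assumes "alternatives_le V f k" "alternatives_le V g l"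
  shows "alternatives_le V (Tensor f g) (k * l)"
proof -
  obtain F where F: "finite F" "card F \<le> k" "\<And>s. supp V s f \<longleftrightarrow> (\<exists>a\<in>F. s \<subseteq> a)"
    using assms(1) by (elim alternatives_leE) blast
  obtain G where G: "finite G" "card G \<le> l" "\<And>s. supp V s g \<longleftrightarrow> (\<exists>a\<in>G. s \<subseteq> a)"
    using assms(2) by (elim alternatives_leE) blast
  have supp_iff: "supp V s (Tensor f g) \<longleftrightarrow> (\<exists>c\<in>(\<lambda>(a, b). a \<union> b) ` (F \<times> G). s \<subseteq> c)" for s
  proof
    assume "supp V s (Tensor f g)"
    then obtain t u where "s = t \<union> u" "supp V t f" "supp V u g"
      by auto
    then obtain a b where "a \<in> F" "b \<in> G" "s \<subseteq> a \<union> b"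
      using F(3)[of t] G(3)[of u] by blast
    then show "\<exists>c\<in>(\<lambda>(a, b). a \<union> b) ` (F \<times> G). s \<subseteq> c"
      by (intro bexI[of _ "a \<union> b"]) auto
  next
    assume "\<exists>c\<in>(\<lambda>(a, b). a \<union> b) ` (F \<times> G). s \<subseteq> c"
    then obtain a b where "a \<in> F" "b \<in> G" "s \<subseteq> a \<union> b" by auto
    then have "supp V (s \<inter> a) f" "supp V (s - a) g"
      using F(3)[of "s \<inter> a"] G(3)[of "s - a"] by blast+
    moreover have "s = (s \<inter> a) \<union> (s - a)" by blast
    ultimately show "supp V s (Tensor f g)" by (simp only: supp.simps) blast
  qed
  have card: "card ((\<lambda>(a, b). a \<union> b) ` (F \<times> G)) \<le> k * l"
    using F(1) G(1) F(2) G(2) by (rule card_image_product_le)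
  show ?thesis
    by (rule alternatives_leI[OF _ card supp_iff]) (simp add: F(1) G(1))
qed

lemma power_Suc_add_power_Suc_le:
  assumes "2 \<le> c"
  shows "c ^ (m + 1) + c ^ (n + 1) \<le> (c::nat) ^ (m + n + 2)"
proof -
  have "c ^ (m + 1) \<le> c ^ (m + n + 1)" "c ^ (n + 1) \<le> c ^ (m + n + 1)"
    using assms by (simp_all add: power_increasing)
  then have "c ^ (m + 1) + c ^ (n + 1) \<le> 2 * c ^ (m + n + 1)" by linarith
  also have "\<dots> \<le> c * c ^ (m + n + 1)" using assms by simp
  also have "\<dots> = c ^ (m + n + 2)" by simp
  finally show ?thesis .
qed

(* Atoms have size 0, hence the exponent size \<phi> + 1. *)
lemma alternatives_le_subst2:
  assumes "imp_free \<phi>" "alternatives_le V \<eta> c" "alternatives_le V \<theta> c" "2 \<le> c"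
  shows "alternatives_le V (subst2 a b \<eta> \<theta> \<phi>) (c ^ (size \<phi> + 1))"
proof -
  have from_one: "alternatives_le V f (c ^ (n + 1))" if "alternatives_le V f 1" for f n
    using that assms(4) by (elim alternatives_le_mono) simp
  show ?thesis
    using assms(1)
  proof (induction \<phi>)
    case (Atom p)
    show ?case using assms(2,3) from_one[OF alternatives_le_Atom, where n = 0] by simp
  next
    case Bot
    show ?case using from_one[OF alternatives_le_Bot, where n = 0] by simp
  next
    case Top
    show ?case using from_one[OF alternatives_le_Top, where n = 0] by simp
  next
    case (Neg f)
    then have "alternatives_le V (subst2 a b \<eta> \<theta> f) (c ^ (size f + 1))" by simp
    then show ?case using from_one[OF alternatives_le_Neg, where n = "size f + 1"] by simp
  next
    case (Ques f)
    then have "alternatives_le V (Ques (subst2 a b \<eta> \<theta> f)) (c ^ (size f + 1) + 1)"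
      using alternatives_le_Ques by simp
    then have "alternatives_le V (Ques (subst2 a b \<eta> \<theta> f)) (c ^ (size f + 1) + c ^ (0 + 1))"
      by (rule alternatives_le_mono) (use assms(4) in simp)
    from alternatives_le_mono[OF this power_Suc_add_power_Suc_le[OF assms(4)]]
    show ?case by simp
  next
    case (Conj f g)
    then have "alternatives_le V (Conj (subst2 a b \<eta> \<theta> f) (subst2 a b \<eta> \<theta> g))
        (c ^ (size f + 1) * c ^ (size g + 1))"
      by (intro alternatives_le_Conj) simp_all
    then show ?case by (simp add: power_add mult_ac)
  next
    case (IDisj f g)
    then have "alternatives_le V (IDisj (subst2 a b \<eta> \<theta> f) (subst2 a b \<eta> \<theta> g))
        (c ^ (size f + 1) + c ^ (size g + 1))"
      by (intro alternatives_le_IDisj) simp_all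
    from alternatives_le_mono[OF this power_Suc_add_power_Suc_le[OF assms(4)]]
    show ?case by simp
  next
    case (Tensor f g)
    then have "alternatives_le V (Tensor (subst2 a b \<eta> \<theta> f) (subst2 a b \<eta> \<theta> g))
        (c ^ (size f + 1) * c ^ (size g + 1))"
      by (intro alternatives_le_Tensor) simp_all
    then show ?case by (simp add: power_add mult_ac)
  qed simp
qed

lemma card_le_if_pairwise_incompatible:
  assumes "alternatives_le V f k"
    and "\<And>x. x \<in> X \<Longrightarrow> supp V (s x) f"
    and "\<And>x y. x \<in> X \<Longrightarrow> y \<in> X \<Longrightarrow> supp V (s x \<union> s y) f \<Longrightarrow> x = y"
  shows "card X \<le> k"
proof -
  obtain F where F: "finite F" "card F \<le> k" "\<And>s. supp V s f \<longleftrightarrow> (\<exists>a\<in>F. s \<subseteq> a)"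
    using assms(1) by (elim alternatives_leE) blast
  have "\<exists>a. a \<in> F \<and> s x \<subseteq> a" if "x \<in> X" for x
    using F(3)[of "s x"] assms(2)[OF that] by blast
  then obtain A where A: "\<And>x. x \<in> X \<Longrightarrow> A x \<in> F \<and> s x \<subseteq> A x"
    by metis
  have "inj_on A X"
  proof (rule inj_onI)
    fix x y assume "x \<in> X" "y \<in> X" "A x = A y"
    then have "supp V (s x \<union> s y) f"
      using A F(3)[of "s x \<union> s y"] by blast
    then show "x = y" using assms(3) \<open>x \<in> X\<close> \<open>y \<in> X\<close> by blast
  qed
  then have "card X \<le> card F" using card_inj_on_le A F(1) by blast
  then show ?thesis using F(2) by linarith
qed

fun idisj_atoms :: "nat \<Rightarrow> form" where
  "idisj_atoms 0 = Bot"
| "idisj_atoms (Suc i) = IDisj (idisj_atoms i) (Atom (Suc i))"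

lemma imp_free_idisj_atoms: "imp_free (idisj_atoms m)"
  by (induction m) auto

lemma alternatives_le_idisj_atoms: "alternatives_le V (idisj_atoms m) (m + 1)"
proof (induction m)
  case 0
  show ?case using alternatives_le_Bot by simp
next
  case (Suc m)
  show ?case using alternatives_le_IDisj[OF Suc alternatives_le_Atom] by simp
qed

lemma supp_idisj_atoms:
  "supp V t (idisj_atoms m) \<longleftrightarrow> t = {} \<or> (\<exists>j\<in>{1..m}. supp V t (Atom j))"
  by (induction m) (auto simp del: supp.simps(1) simp: atLeastAtMostSuc_conv)

definition switch_val :: "(nat \<times> bool \<Rightarrow> 'w) \<Rightarrow> 'w \<Rightarrow> nat set" where
  "switch_val g w = {p. (\<exists>b. w = g (p, b)) \<or> (p = 0 \<and> (\<exists>i. w = g (i, True)))}"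

lemma switch_val_apply:
  "inj g \<Longrightarrow> switch_val g (g (i, b)) = insert i (if b then {0} else {})"
  unfolding switch_val_def by (auto dest: injD)

definition choice_state :: "(nat \<times> bool \<Rightarrow> 'w) \<Rightarrow> nat \<Rightarrow> nat set \<Rightarrow> 'w set" where
  "choice_state g m S = (\<lambda>i. g (i, i \<in> S)) ` {1..m}"

lemma supp_choice_state:
  assumes "inj g"
  shows "supp (switch_val g) (choice_state g m S) (Imp (idisj_atoms m) (Ques (Atom 0)))"
proof (simp only: supp.simps(7), intro allI impI)
  fix t assume sub: "t \<subseteq> choice_state g m S" and t: "supp (switch_val g) t (idisj_atoms m)"
  show "supp (switch_val g) t (Ques (Atom 0))"
  proof (cases "t = {}")
    case False
    then obtain j where j: "j \<in> {1..m}" "supp (switch_val g) t (Atom j)"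
      using t unfolding supp_idisj_atoms by blast
    have "t \<subseteq> {g (j, j \<in> S)}"
    proof
      fix w assume "w \<in> t"
      then obtain i where w: "w = g (i, i \<in> S)" using sub by (auto simp: choice_state_def)
      have "j \<in> switch_val g w" using j \<open>w \<in> t\<close> by simp
      then have "i = j" using \<open>j \<in> {1..m}\<close> switch_val_apply[OF assms] w by (auto split: if_splits)
      then show "w \<in> {g (j, j \<in> S)}" using w by simp
    qed
    then have "t = {} \<or> t = {g (j, j \<in> S)}" by blast
    then show ?thesis using switch_val_apply[OF assms] by auto
  qed simp
qed

lemma not_supp_union_choice_states:
  assumes "inj g" "S \<subseteq> {1..m}" "S' \<subseteq> {1..m}" "S \<noteq> S'"
  shows "\<not> supp (switch_val g) (choice_state g m S \<union> choice_state g m S')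
                (Imp (idisj_atoms m) (Ques (Atom 0)))"
proof
  assume imp: "supp (switch_val g) (choice_state g m S \<union> choice_state g m S')
                 (Imp (idisj_atoms m) (Ques (Atom 0)))"
  obtain i where i: "i \<in> {1..m}" "i \<in> S \<longleftrightarrow> i \<notin> S'" using assms(2-4) by blast
  define t where "t = {g (i, False), g (i, True)}"
  have "g (i, i \<in> S) \<in> choice_state g m S" "g (i, i \<in> S') \<in> choice_state g m S'"
    using i(1) by (auto simp: choice_state_def)
  moreover have "t = {g (i, i \<in> S), g (i, i \<in> S')}"
    using i(2) by (cases "i \<in> S") (auto simp: t_def)
  ultimately have "t \<subseteq> choice_state g m S \<union> choice_state g m S'"
    by blast
  moreover have "supp (switch_val g) t (idisj_atoms m)"
    unfolding supp_idisj_atoms using i switch_val_apply[OF assms(1)] by (auto simp: t_def)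
  ultimately have "supp (switch_val g) t (Ques (Atom 0))" using imp by simp
  moreover have "\<not> supp (switch_val g) t (Atom 0)" "supp (switch_val g) {g (i, True)} (Atom 0)"
    using i switch_val_apply[OF assms(1)] by (auto simp: t_def)
  ultimately show False by (auto simp: t_def)
qed

lemma alternatives_le_Imp_idisj_atoms_lower_bound:
  assumes "inj g" "alternatives_le (switch_val g) (Imp (idisj_atoms m) (Ques (Atom 0))) k"
  shows "2 ^ m \<le> k"
proof -
  have "card (Pow {1..m}) \<le> k"
    using card_le_if_pairwise_incompatible[OF assms(2), of "Pow {1..m}" "choice_state g m"]
      supp_choice_state[OF assms(1)] not_supp_union_choice_states[OF assms(1)] by blast
  then show ?thesis by (simp add: card_Pow)
qed

lemma exists_power_less_two_power: "\<exists>m::nat. (m + 2) ^ d < 2 ^ m"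
proof -
  define m :: nat where "m = 2 ^ (2 * d + 1)"
  have "d + 1 \<le> 2 ^ d"
    using Suc_leI[OF less_exp[of d]] by simp
  then have "d * (d + 1) \<le> d * 2 ^ d"
    by (rule mult_le_mono2)
  also have "\<dots> < 2 ^ d * 2 ^ d"
    using less_exp[of d] by simp
  finally have "d * (d + 1) < 2 ^ d * 2 ^ d" .
  then have "(2 * d + 2) * d < 2 * (2 ^ d * 2 ^ d)" by simp
  also have "\<dots> = m"
    unfolding m_def by (simp add: mult_2 power_add)
  finally have exponent: "(2 * d + 2) * d < m" .
  have "2 ^ 1 \<le> m"
    unfolding m_def by (rule power_increasing) simp_all
  then have "(m + 2) ^ d \<le> (2 * m) ^ d"
    by (intro power_mono) simp_all
  also have "2 * m = 2 ^ (2 * d + 2)"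
    unfolding m_def by simp
  also have "(2 ^ (2 * d + 2)) ^ d = (2::nat) ^ ((2 * d + 2) * d)"
    by (simp only: power_mult)
  also have "\<dots> < 2 ^ m"
    using exponent by (rule power_strict_increasing) simp
  finally show ?thesis by blast
qed

lemma infinite_UNIV_obtains_inj_nat_bool:
  assumes "infinite (UNIV :: 'w set)"
  obtains g :: "nat \<times> bool \<Rightarrow> 'w" where "inj g"
proof -
  obtain h :: "nat \<Rightarrow> 'w" where "inj h"
    using infinite_iff_countable_subset[THEN iffD1, OF assms] by blast
  moreover have "inj (\<lambda>(i, b). 2 * i + of_bool b :: nat)"
    by (auto simp: inj_def) presburger+
  ultimately show ?thesis
    using that inj_compose by blast
qed

theorem theorem3:
  assumes "infinite (UNIV :: 'w set)"
  shows "\<not> (\<exists>\<phi> a b. a \<noteq> b \<and> imp_free \<phi> \<and>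
            (\<forall>\<eta> \<theta>. imp_free \<eta> \<and> imp_free \<theta> \<longrightarrow>
                equiv_on TYPE('w) (subst2 a b \<eta> \<theta> \<phi>) (Imp \<eta> \<theta>)))"
proof
  assume "\<exists>\<phi> a b. a \<noteq> b \<and> imp_free \<phi> \<and>
            (\<forall>\<eta> \<theta>. imp_free \<eta> \<and> imp_free \<theta> \<longrightarrow>
                equiv_on TYPE('w) (subst2 a b \<eta> \<theta> \<phi>) (Imp \<eta> \<theta>))"
  then obtain \<phi> a b where \<phi>: "imp_free \<phi>" and defines_imp:
    "\<And>\<eta> \<theta>. imp_free \<eta> \<Longrightarrow> imp_free \<theta> \<Longrightarrow> equiv_on TYPE('w) (subst2 a b \<eta> \<theta> \<phi>) (Imp \<eta> \<theta>)"
    by blast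
  obtain g :: "nat \<times> bool \<Rightarrow> 'w" where g: "inj g"
    using assms by (rule infinite_UNIV_obtains_inj_nat_bool)
  obtain m where m: "(m + 2) ^ (size \<phi> + 1) < 2 ^ m" using exists_power_less_two_power by blast
  let ?\<eta> = "idisj_atoms m" and ?\<theta> = "Ques (Atom 0)"
  have "alternatives_le (switch_val g) ?\<eta> (m + 2)"
    using alternatives_le_idisj_atoms by (rule alternatives_le_mono) simp
  moreover have "alternatives_le (switch_val g) ?\<theta> (m + 2)"
    using alternatives_le_Ques[OF alternatives_le_Atom] by (rule alternatives_le_mono) simp
  ultimately have "alternatives_le (switch_val g) (subst2 a b ?\<eta> ?\<theta> \<phi>) ((m + 2) ^ (size \<phi> + 1))"
    by (rule alternatives_le_subst2[OF \<phi>]) simp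
  moreover have "equiv_on TYPE('w) (subst2 a b ?\<eta> ?\<theta> \<phi>) (Imp ?\<eta> ?\<theta>)"
    using defines_imp imp_free_idisj_atoms by simp
  ultimately have "alternatives_le (switch_val g) (Imp ?\<eta> ?\<theta>) ((m + 2) ^ (size \<phi> + 1))"
    using alternatives_le_cong[OF equiv_on_supp_iff] by blast
  then have "2 ^ m \<le> (m + 2) ^ (size \<phi> + 1)"
    by (rule alternatives_le_Imp_idisj_atoms_lower_bound[OF g])
  with m show False by linarith
qed

end
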